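(* Let $s_0,s_1\in\mathbb{R}$ and $p_0,p_1,q_0,q_1\in(0,\infty]$, and set $\frac1p=\frac1{p_0}+\frac1{p_1}$, $\frac1q=\frac1{q_0}+\frac1{q_1}$, $s=s_0+s_1$ (with $1/\infty=0$). Then for every $h\in Z^{p,q}_s$ there exist $F\in Z^{p_0,q_0}_{s_0}$ and $G\in Z^{p_1,q_1}_{s_1}$ such that $h=FG$ and $\|F\|_{Z^{p_0,q_0}_{s_0}}\|G\|_{Z^{p_1,q_1}_{s_1}}\lesssim\|h\|_{Z^{p,q}_s}$.
   Context: Fix $n\ge1$; functions are measurable scalar (or $\mathbb{C}^N$-valued) functions on $\mathbb{R}^{1+n}_+:=(0,\infty)\times\mathbb{R}^n$ (for vector-valued $F$ and scalar $G$ the product is pointwise). Let $\mathcal{Q}(\mathbb{R}^n)$ be a system of dyadic cubes, $\ell(Q)$ the side length, $\overline{Q}:=(\ell(Q),2\ell(Q))\times Q$ and $\mathcal{G}:=\{\overline{Q}\}$. For $q\in(0,\infty)$, $[|f|^q]^{1/q}_{\overline{Q}}:=\big(\iint_{\overline{Q}}|f(\tau,\xi)|^q\frac{d\tau\,d\xi}{\tau^{1+n}}\big)^{1/q}$, and for $q=\infty$ it is the essential supremum of $|f|$ on $\overline{Q}$. For $p,q\in(0,\infty]$, $s\in\mathbb{R}$, $\|f\|_{Z^{p,q}_s}:=\big(\sum_{\overline{Q}\in\mathcal{G}}\ell(Q)^n\big(\ell(Q)^{-s}[|f|^q]^{1/q}_{\overline{Q}}\big)^p\big)^{1/p}$ (supremum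 over $\overline Q$ of $\ell(Q)^{-s}[|f|^q]^{1/q}_{\overline{Q}}$ if $p=\infty$), and $Z^{p,q}_s$ is the set of $f$ with finite quasinorm. *)

theory Defs
  imports "HOL-Analysis.Analysis"
begin

definition enn_powr :: "ennreal \<Rightarrow> real \<Rightarrow> ennreal" where
  "enn_powr x r = (if x = \<infinity> then \<infinity> else ennreal (enn2real x powr r))"

text \<open>Dyadic cubes in R^n, indexed injectively by (k, m) with k :: int, m :: int^n:
  Q(k,m) = product over i of [m_i 2^(-k), (m_i + 1) 2^(-k)), side length 2^(-k).\<close>
definition dyadic_len :: "int \<times> (int ^ 'n) \<Rightarrow> real" where
  "dyadic_len km = 2 powr (- real_of_int (fst km))"

definition dyadic_cube :: "int \<times> (int ^ 'n::finite) \<Rightarrow> (real ^ 'n) set" where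
  "dyadic_cube km = {\<xi>. \<forall>i. real_of_int (snd km $ i) * dyadic_len km \<le> \<xi> $ i
                          \<and> \<xi> $ i < (real_of_int (snd km $ i) + 1) * dyadic_len km}"

text \<open>Whitney box  Qbar = (l(Q), 2 l(Q)) x Q  in R^{1+n}_+ = (0,\<infinity>) x R^n.\<close>
definition whitney_box :: "int \<times> (int ^ 'n::finite) \<Rightarrow> (real \<times> (real ^ 'n)) set" where
  "whitney_box km = {dyadic_len km <..< 2 * dyadic_len km} \<times> dyadic_cube km"

definition local_Lq :: "ennreal \<Rightarrow> (real \<times> (real ^ ('n::finite)) \<Rightarrow> 'v::real_normed_vector)
    \<Rightarrow> int \<times> (int ^ 'n) \<Rightarrow> ennreal" where
  "local_Lq q f km =
     (if q = \<infinity> then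
        Inf {C. AE x in lebesgue. x \<in> whitney_box km \<longrightarrow> ennreal (norm (f x)) \<le> C}
      else
        enn_powr (\<integral>\<^sup>+ x. indicator (whitney_box km) x *
                    ennreal (norm (f x) powr enn2real q / fst x ^ (1 + CARD('n))) \<partial>lebesgue)
                 (1 / enn2real q))"

definition Z_norm :: "ennreal \<Rightarrow> ennreal \<Rightarrow> real \<Rightarrow>
    (real \<times> (real ^ ('n::finite)) \<Rightarrow> 'v::real_normed_vector) \<Rightarrow> ennreal" where
  "Z_norm p q s f =
     (if p = \<infinity> then
        (SUP km\<in>(UNIV :: (int \<times> (int ^ 'n)) set).
           ennreal (dyadic_len km powr (- s)) * local_Lq q f km)
      else
        enn_powr (\<integral>\<^sup>+ km. ennreal (dyadic_len km ^ CARD('n)) *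
                    enn_powr (ennreal (dyadic_len km powr (- s)) * local_Lq q f km) (enn2real p)
                  \<partial>count_space (UNIV :: (int \<times> (int ^ 'n)) set))
                 (1 / enn2real p))"

definition Z_space :: "ennreal \<Rightarrow> ennreal \<Rightarrow> real \<Rightarrow>
    (real \<times> (real ^ ('n::finite)) \<Rightarrow> 'v::real_normed_vector) set" where
  "Z_space p q s = {f. f \<in> borel_measurable lebesgue \<and> Z_norm p q s f < \<infinity>}"

end

theory Submission
  imports Defs
begin

text \<open>Normalise \<open>h\<close> box by box. On a Whitney box \<open>Q\<close> let \<open>a_Q\<close> be the local \<open>L^q\<close> norm of \<open>h\<close> and
  \<open>b_Q = l(Q)^(-s) a_Q\<close>, so that the \<open>Z\<close>-norm of \<open>h\<close> is a weighted \<open>l^p\<close> norm of \<open>(b_Q)\<close>.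
  With \<open>\<theta> = p/p0\<close>, \<open>1 - \<theta> = p/p1\<close>, \<open>\<phi> = q/q0\<close>, \<open>1 - \<phi> = q/q1\<close> put
  \<open>G = l(Q)^s1 b_Q^(1-\<theta>) (|h|/a_Q)^(1-\<phi>)\<close> and \<open>F = h/G\<close>, so \<open>|F| = l(Q)^s0 b_Q^\<theta> (|h|/a_Q)^\<phi>\<close>.
  As \<open>|h|/a_Q\<close> has unit local \<open>L^q\<close> norm, its powers \<open>\<phi>\<close> and \<open>1 - \<phi>\<close> have unit local \<open>L^q0\<close>
  and \<open>L^q1\<close> norms. Hence the sequences attached to \<open>F\<close> and \<open>G\<close> are dominated by \<open>(b_Q^\<theta>)\<close> and
  \<open>(b_Q^(1-\<theta>))\<close>, whose weighted \<open>l^p0\<close> and \<open>l^p1\<close> norms are the powers \<open>\<theta>\<close> and \<open>1 - \<theta>\<close> of that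
  of \<open>(b_Q)\<close>: the estimate holds with constant \<open>1\<close>. Boxes with \<open>a_Q = 0\<close> carry \<open>h = 0\<close> almost
  everywhere and contribute nothing.\<close>

section \<open>Powers of extended nonnegative reals\<close>

lemma enn_powr_ennreal: "c \<ge> 0 \<Longrightarrow> enn_powr (ennreal c) r = ennreal (c powr r)"
  by (simp add: enn_powr_def)

lemma enn_powr_top [simp]: "enn_powr top r = top"
  by (simp add: enn_powr_def)

lemma enn_powr_zero [simp]: "enn_powr 0 r = 0"
  by (simp add: enn_powr_def)

lemma enn_powr_less_top_iff [simp]: "enn_powr x r < top \<longleftrightarrow> x < top"
  by (auto simp: enn_powr_def top.not_eq_extremum)

lemma enn_powr_one: "x < top \<Longrightarrow> enn_powr x 1 = x"
  by (cases x rule: ennreal_cases) (auto simp: enn_powr_ennreal)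

lemma enn_powr_mono:
  assumes "x \<le> y" "r \<ge> 0"
  shows "enn_powr x r \<le> enn_powr y r"
proof (cases y rule: ennreal_cases)
  case (real b)
  with assms(1) obtain a where "x = ennreal a" "0 \<le> a" "a \<le> b"
    by (cases x rule: ennreal_cases) (auto simp: top_unique)
  then show ?thesis
    using real assms(2) by (simp add: enn_powr_ennreal powr_mono2)
qed simp

lemma enn_powr_add: "enn_powr x r * enn_powr x t = enn_powr x (r + t)"
  by (cases x rule: ennreal_cases) (auto simp: enn_powr_ennreal powr_add ennreal_mult[symmetric])

lemma enn_powr_enn_powr: "enn_powr (enn_powr x r) t = enn_powr x (r * t)"
  by (cases x rule: ennreal_cases) (simp_all add: enn_powr_ennreal powr_powr)

lemma enn_powr_eq_0_iff [simp]: "enn_powr x r = 0 \<longleftrightarrow> x = 0"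
  by (cases x rule: ennreal_cases) (auto simp: enn_powr_ennreal)

lemma enn_powr_zero_exponent_le:
  assumes "x \<noteq> 0 \<Longrightarrow> y \<noteq> 0" "x = top \<Longrightarrow> y = top"
  shows "enn_powr x 0 \<le> enn_powr y 0"
proof (cases "x = 0 \<or> y = top")
  case False
  then obtain a b where "x = ennreal a" "y = ennreal b" "a > 0" "b > 0"
    using assms by (cases x rule: ennreal_cases; cases y rule: ennreal_cases) auto
  then show ?thesis by (simp add: enn_powr_ennreal)
qed auto

lemma enn2real_inverse: "enn2real (inverse x) = inverse (enn2real x)"
proof (cases x rule: ennreal_cases)
  case (real r)
  then show ?thesis by (cases "r = 0") (auto simp: inverse_ennreal)
qed simp

lemma ennreal_le_of_less_add_inverse_Suc:
  fixes x y :: ennreal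
  assumes "\<And>n::nat. x < y + ennreal (1 / Suc n)"
  shows "x \<le> y"
proof (rule ennreal_le_epsilon)
  fix e :: real assume "0 < e"
  then obtain n where "1 / Suc n < e"
    using nat_approx_posE by blast
  then have "y + ennreal (1 / Suc n) \<le> y + ennreal e"
    by (intro add_left_mono ennreal_leI) simp
  then show "x \<le> y + ennreal e"
    using assms[of n] by (meson less_imp_le order.trans)
qed

section \<open>Hoelder exponents\<close>

lemma hoelder_exponent_top:
  fixes p p0 p1 :: ennreal
  assumes "inverse p = inverse p0 + inverse p1"
  shows "p = top \<longleftrightarrow> p0 = top \<and> p1 = top"
  using assms by (metis add_eq_0_iff_both_eq_0 ennreal_inverse_eq_0_iff infinity_ennreal_def)

lemma hoelder_exponent_real:
  fixes p p0 p1 :: ennreal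
  assumes "p0 > 0" "p1 > 0" "inverse p = inverse p0 + inverse p1" "p \<noteq> top"
  shows "inverse (enn2real p) = inverse (enn2real p0) + inverse (enn2real p1)"
proof -
  have "inverse p0 < top" "inverse p1 < top"
    using assms(1,2) by (auto simp: less_top[symmetric])
  then have "enn2real (inverse p) = enn2real (inverse p0) + enn2real (inverse p1)"
    using assms(3) by (simp add: enn2real_plus)
  then show ?thesis by (simp add: enn2real_inverse)
qed

lemma hoelder_exponent_pos:
  fixes p p0 p1 :: ennreal
  assumes "p0 > 0" "p1 > 0" "inverse p = inverse p0 + inverse p1"
  shows "p > 0"
proof -
  have "inverse p \<noteq> top"
    using assms by (simp add: ennreal_add_eq_top zero_less_iff_neq_zero)
  then show ?thesis by (simp add: zero_less_iff_neq_zero)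
qed

text \<open>For \<open>p = \<infinity>\<close> (hence \<open>p0 = p1 = \<infinity>\<close>) the whole weight \<open>1\<close> goes to the first factor; for
  finite \<open>p\<close> the ratio against \<open>p0 = \<infinity>\<close> is \<open>0\<close>, since \<open>enn2real \<infinity> = 0\<close>.\<close>
definition exponent_ratio :: "ennreal \<Rightarrow> ennreal \<Rightarrow> real" where
  "exponent_ratio p p0 = (if p = top then 1 else enn2real p / enn2real p0)"

text \<open>The power map \<open>x \<mapsto> x\<^sup>\<theta>\<close> carries \<open>L\<^sup>p\<close> into \<open>L\<^sup>p\<^sup>0\<close>: \<open>\<theta> p0 = p\<close> for finite \<open>p0\<close>; for
  \<open>p0 = \<infinity>\<close> either \<open>p = \<infinity>\<close> too, or \<open>\<theta> = 0\<close>.\<close>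
definition scales_exponent :: "real \<Rightarrow> ennreal \<Rightarrow> ennreal \<Rightarrow> bool" where
  "scales_exponent \<theta> p p0 \<longleftrightarrow> 0 \<le> \<theta> \<and>
     (p0 \<noteq> top \<longrightarrow> p \<noteq> top \<and> \<theta> * enn2real p0 = enn2real p) \<and>
     (p0 = top \<longrightarrow> p \<noteq> top \<longrightarrow> \<theta> = 0)"

lemma scales_exponent_ratio:
  assumes "p0 > 0" "p0 \<noteq> top \<Longrightarrow> p \<noteq> top"
  shows "scales_exponent (exponent_ratio p p0) p p0"
  using assms by (auto simp: scales_exponent_def exponent_ratio_def enn2real_eq_0_iff)

lemma exponent_ratio_add:
  fixes p p0 p1 :: ennreal
  assumes "p0 > 0" "p1 > 0" "inverse p = inverse p0 + inverse p1" "p \<noteq> top"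
  shows "exponent_ratio p p0 + exponent_ratio p p1 = 1"
proof -
  have "enn2real p \<noteq> 0"
    using hoelder_exponent_pos[OF assms(1-3)] assms(4) by (simp add: enn2real_eq_0_iff)
  then have "enn2real p * (inverse (enn2real p0) + inverse (enn2real p1)) = 1"
    by (simp flip: hoelder_exponent_real[OF assms])
  then show ?thesis
    using assms(4) by (simp add: exponent_ratio_def divide_inverse distrib_left)
qed

lemma hoelder_exponents_scale:
  fixes p p0 p1 :: ennreal
  assumes "p0 > 0" "p1 > 0" "inverse p = inverse p0 + inverse p1"
  shows "scales_exponent (exponent_ratio p p0) p p0"
    and "scales_exponent (1 - exponent_ratio p p0) p p1"
proof -
  note top_iff = hoelder_exponent_top[OF assms(3)]
  show "scales_exponent (exponent_ratio p p0) p p0"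
    using assms(1) top_iff by (intro scales_exponent_ratio) auto
  show "scales_exponent (1 - exponent_ratio p p0) p p1"
  proof (cases "p = top")
    case True
    then show ?thesis using top_iff by (simp add: scales_exponent_def exponent_ratio_def)
  next
    case False
    then have "1 - exponent_ratio p p0 = exponent_ratio p p1"
      using exponent_ratio_add[OF assms] by simp
    then show ?thesis
      using assms(2) False by (simp add: scales_exponent_ratio)
  qed
qed

section \<open>Weighted sequence norms\<close>

definition weighted_lp :: "ennreal \<Rightarrow> ('a \<Rightarrow> ennreal) \<Rightarrow> ('a \<Rightarrow> ennreal) \<Rightarrow> ennreal" where
  "weighted_lp p w c =
     (if p = top then (SUP k. c k)
      else enn_powr (\<integral>\<^sup>+ k. w k * enn_powr (c k) (enn2real p) \<partial>count_space UNIV) (1 / enn2real p))"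

lemma weighted_lp_mono:
  assumes "\<And>k. c k \<le> d k"
  shows "weighted_lp p w c \<le> weighted_lp p w d"
  using assms unfolding weighted_lp_def
  by (auto intro!: SUP_mono enn_powr_mono nn_integral_mono mult_left_mono)

lemma nn_integral_count_space_point_le: "f k \<le> (\<integral>\<^sup>+ x. f x \<partial>count_space UNIV)"
proof -
  have "f k = (\<integral>\<^sup>+ x. f x * indicator {k} x \<partial>count_space UNIV)" by simp
  also have "\<dots> \<le> (\<integral>\<^sup>+ x. f x \<partial>count_space UNIV)"
    by (intro nn_integral_mono) (simp split: split_indicator)
  finally show ?thesis .
qed

lemma weighted_lp_less_top_imp:
  assumes "weighted_lp p w c < top" "w k > 0"
  shows "c k < top"
proof (cases "p = top")
  case True
  then show ?thesis
    using assms(1) by (simp add: weighted_lp_def) (meson SUP_upper UNIV_I le_less_trans)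
next
  case False
  let ?I = "\<integral>\<^sup>+ k. w k * enn_powr (c k) (enn2real p) \<partial>count_space UNIV"
  have "w k * enn_powr (c k) (enn2real p) \<le> ?I"
    by (rule nn_integral_count_space_point_le)
  also have "?I < top"
    using assms(1) False by (simp add: weighted_lp_def)
  finally show ?thesis
    using assms(2) by (auto simp: ennreal_mult_less_top)
qed

lemma weighted_lp_powr_le:
  assumes \<theta>: "scales_exponent \<theta> p p0" and "p > 0" and w: "\<And>k. w k > 0"
  shows "weighted_lp p0 w (\<lambda>k. enn_powr (c k) \<theta>) \<le> enn_powr (weighted_lp p w c) \<theta>"
proof -
  define P where "P = enn2real p"
  define I where "I = (\<integral>\<^sup>+ k. w k * enn_powr (c k) P \<partial>count_space UNIV)"
  have term_le: "w k * enn_powr (c k) P \<le> I" for k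
    unfolding I_def by (rule nn_integral_count_space_point_le)
  consider "p = top" | "p \<noteq> top" "p0 = top" | "p \<noteq> top" "p0 \<noteq> top"
    by blast
  then show ?thesis
  proof cases
    case 1
    then have "p0 = top" using \<theta> by (auto simp: scales_exponent_def)
    with 1 show ?thesis using \<theta>
      by (auto simp: weighted_lp_def scales_exponent_def intro!: SUP_least enn_powr_mono SUP_upper)
  next
    case 2
    then have "\<theta> = 0" using \<theta> by (simp add: scales_exponent_def)
    \<comment> \<open>\<open>enn_powr x 0\<close> only records whether \<open>x\<close> is \<open>0\<close>, finite positive, or \<open>\<infinity>\<close>\<close>
    have "enn_powr (c k) 0 \<le> enn_powr (enn_powr I (1 / P)) 0" for k
    proof (rule enn_powr_zero_exponent_le)
      show "enn_powr I (1 / P) \<noteq> 0" if "c k \<noteq> 0"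
      proof -
        have "0 < w k * enn_powr (c k) P"
          using that w[of k] by (simp add: ennreal_zero_less_mult_iff zero_less_iff_neq_zero)
        then show ?thesis using term_le[of k] by simp
      qed
      show "enn_powr I (1 / P) = top" if "c k = top"
        using term_le[of k] that w[of k] by (simp add: ennreal_mult_eq_top_iff top_unique)
    qed
    with 2 show ?thesis
      by (simp add: weighted_lp_def \<open>\<theta> = 0\<close> I_def P_def SUP_least)
  next
    case 3
    then have "\<theta> * enn2real p0 = P" using \<theta> by (simp add: scales_exponent_def P_def)
    moreover have "P > 0" using 3 \<open>p > 0\<close> by (simp add: P_def enn2real_positive_iff less_top)
    ultimately have "1 / enn2real p0 = 1 / P * \<theta>" by (auto simp: field_simps)
    with 3 show ?thesis
      by (simp add: weighted_lp_def enn_powr_enn_powr \<open>\<theta> * enn2real p0 = P\<close> I_def P_def)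
  qed
qed

section \<open>Whitney boxes\<close>

lemma dyadic_len_pos: "dyadic_len km > 0"
  by (simp add: dyadic_len_def)

lemma dyadic_len_double_le:
  assumes "fst km < fst km'"
  shows "2 * dyadic_len km' \<le> dyadic_len km"
proof -
  have "2 powr (1 - real_of_int (fst km')) \<le> 2 powr (- real_of_int (fst km))"
    using assms by (intro powr_mono) auto
  then show ?thesis by (simp add: dyadic_len_def powr_diff powr_minus field_simps)
qed

lemma fst_pos_of_whitney_box: "x \<in> whitney_box km \<Longrightarrow> fst x > 0"
  using dyadic_len_pos[of km] by (auto simp: whitney_box_def)

lemma whitney_box_sets_lebesgue: "whitney_box (km :: int \<times> (int ^ 'n::finite)) \<in> sets lebesgue"
proof -
  obtain k m where km: "km = (k, m)" by force
  have "dyadic_cube km \<in> sets borel"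
    unfolding km dyadic_cube_def by measurable
  then have "whitney_box km \<in> sets borel"
    unfolding whitney_box_def borel_prod[symmetric] by (intro pair_measureI) simp_all
  then show ?thesis
    by (simp add: sets_completionI_sets)
qed

lemma whitney_box_index_floor:
  assumes "x \<in> whitney_box km"
  shows "snd km $ i = \<lfloor>snd x $ i / dyadic_len km\<rfloor>"
proof -
  have "real_of_int (snd km $ i) \<le> snd x $ i / dyadic_len km"
    "snd x $ i / dyadic_len km < real_of_int (snd km $ i) + 1"
    using assms dyadic_len_pos[of km] by (auto simp: whitney_box_def dyadic_cube_def field_simps)
  then show ?thesis by (simp add: floor_unique)
qed

lemma whitney_box_unique:
  assumes "x \<in> whitney_box km" "x \<in> whitney_box km'"
  shows "km = km'"
proof -
  have "\<not> fst km < fst km'" "\<not> fst km' < fst km"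
    using assms dyadic_len_double_le[of km km'] dyadic_len_double_le[of km' km]
    by (auto simp: whitney_box_def)
  then have k: "fst km = fst km'" by simp
  then have l: "dyadic_len km' = dyadic_len km" by (simp add: dyadic_len_def)
  have "snd km $ i = snd km' $ i" for i
    using whitney_box_index_floor[OF assms(1)] whitney_box_index_floor[OF assms(2)] l by simp
  then show ?thesis using k by (simp add: prod_eq_iff vec_eq_iff)
qed

definition glue_boxes ::
    "(int \<times> (int ^ 'n) \<Rightarrow> real \<times> (real ^ 'n::finite) \<Rightarrow> 'b) \<Rightarrow> (real \<times> (real ^ 'n) \<Rightarrow> 'b)
      \<Rightarrow> real \<times> (real ^ 'n) \<Rightarrow> 'b" where
  "glue_boxes \<Gamma> g x = (if \<exists>km. x \<in> whitney_box km then \<Gamma> (THE km. x \<in> whitney_box km) x else g x)"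

lemma glue_boxes_whitney_box: "x \<in> whitney_box km \<Longrightarrow> glue_boxes \<Gamma> g x = \<Gamma> km x"
  unfolding glue_boxes_def using whitney_box_unique by (metis (mono_tags, lifting) the_equality)

lemma measurable_glue_boxes:
  fixes \<Gamma> :: "int \<times> (int ^ 'n) \<Rightarrow> real \<times> (real ^ 'n::finite) \<Rightarrow> 'b::topological_space"
  assumes \<Gamma>: "\<And>km. \<Gamma> km \<in> borel_measurable lebesgue" and g: "g \<in> borel_measurable lebesgue"
  shows "glue_boxes \<Gamma> g \<in> borel_measurable lebesgue"
proof -
  let ?U = "\<Union>km. whitney_box km :: (real \<times> (real ^ 'n)) set"
  let ?C = "range whitney_box \<union> {- ?U}"
  have U: "?U \<in> sets lebesgue"
    by (intro sets.countable_UN'') (auto intro: whitney_box_sets_lebesgue)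
  show ?thesis
  proof (rule measurable_piecewise_restrict[where C = ?C])
    show "countable ?C" by simp
    show "space lebesgue \<subseteq> \<Union> ?C" by auto
  next
    fix \<Omega> assume "\<Omega> \<in> ?C"
    then consider km where "\<Omega> = whitney_box km" | "\<Omega> = - ?U" by blast
    then show "\<Omega> \<inter> space lebesgue \<in> sets lebesgue"
      using U whitney_box_sets_lebesgue by cases (auto simp: Compl_eq_Diff_UNIV)
  next
    fix \<Omega> assume "\<Omega> \<in> ?C"
    then consider km where "\<Omega> = whitney_box km" | "\<Omega> = - ?U" by blast
    then show "glue_boxes \<Gamma> g \<in> borel_measurable (restrict_space lebesgue \<Omega>)"
    proof cases
      case 1
      then have "\<And>x. x \<in> space (restrict_space lebesgue \<Omega>) \<Longrightarrow> \<Gamma> km x = glue_boxes \<Gamma> g x"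
        by (simp add: glue_boxes_whitney_box)
      then show ?thesis by (rule measurable_cong[THEN iffD1, OF _ measurable_restrict_space1[OF \<Gamma>]])
    next
      case 2
      then have "\<And>x. x \<in> space (restrict_space lebesgue \<Omega>) \<Longrightarrow> g x = glue_boxes \<Gamma> g x"
        by (simp add: glue_boxes_def)
      then show ?thesis by (rule measurable_cong[THEN iffD1, OF _ measurable_restrict_space1[OF g]])
    qed
  qed
qed

section \<open>Local norms on a Whitney box\<close>

definition box_moment :: "ennreal \<Rightarrow> (real \<times> (real ^ 'n::finite) \<Rightarrow> 'v::real_normed_vector)
    \<Rightarrow> int \<times> (int ^ 'n) \<Rightarrow> ennreal" where
  "box_moment r f km = (\<integral>\<^sup>+ x. indicator (whitney_box km) x *
     ennreal (norm (f x) powr enn2real r / fst x ^ (1 + CARD('n))) \<partial>lebesgue)"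

lemma local_Lq_finite_exponent:
  "r \<noteq> top \<Longrightarrow> local_Lq r f km = enn_powr (box_moment r f km) (1 / enn2real r)"
  by (simp add: local_Lq_def box_moment_def)

lemma borel_measurable_box_moment_integrand:
  fixes f :: "real \<times> (real ^ 'n::finite) \<Rightarrow> 'v::real_normed_vector"
  assumes [measurable]: "f \<in> borel_measurable lebesgue"
  shows "(\<lambda>x. indicator (whitney_box km) x * ennreal (norm (f x) powr t / fst x ^ (1 + CARD('n))))
    \<in> borel_measurable lebesgue"
proof -
  have [measurable]: "fst \<in> borel_measurable (lebesgue :: (real \<times> (real ^ 'n)) measure)"
    by (rule measurable_completion)
      (simp add: measurable_lborel1 borel_measurable_continuous_onI continuous_on_fst continuous_on_id)
  have [measurable]: "whitney_box km \<in> sets lebesgue"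
    by (rule whitney_box_sets_lebesgue)
  show ?thesis by measurable
qed

lemma box_moment_of_local_Lq:
  assumes "r > 0" "r \<noteq> top" "local_Lq r f km = ennreal a" "a \<ge> 0"
  shows "box_moment r f km = ennreal (a powr enn2real r)"
proof -
  have e: "enn_powr (box_moment r f km) (1 / enn2real r) = ennreal a"
    using assms(2,3) by (simp add: local_Lq_finite_exponent)
  then obtain m where m: "box_moment r f km = ennreal m" "m \<ge> 0"
    by (cases "box_moment r f km" rule: ennreal_cases) auto
  with e assms(4) have "m powr (1 / enn2real r) = a"
    by (simp add: enn_powr_ennreal)
  moreover have "enn2real r > 0"
    using assms(1,2) by (simp add: enn2real_positive_iff less_top)
  ultimately show ?thesis
    using m by (auto simp: powr_powr)
qed

lemma local_Lq_top_le:
  assumes "AE x in lebesgue. x \<in> whitney_box km \<longrightarrow> norm (f x) \<le> c"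
  shows "local_Lq top f km \<le> ennreal c"
  unfolding local_Lq_def using assms
  by (auto intro!: Inf_lower elim!: eventually_mono intro: ennreal_leI)

lemma AE_norm_le_local_Lq_top:
  "AE x in lebesgue. x \<in> whitney_box km \<longrightarrow> ennreal (norm (f x)) \<le> local_Lq top f km"
proof -
  define S where "S = {C. AE x in lebesgue. x \<in> whitney_box km \<longrightarrow> ennreal (norm (f x)) \<le> C}"
  have "AE x in lebesgue. \<forall>n::nat. x \<in> whitney_box km \<longrightarrow> ennreal (norm (f x)) < Inf S + 1 / Suc n"
  proof (rule AE_all_countable[THEN iffD2], rule allI)
    fix n :: nat
    show "AE x in lebesgue. x \<in> whitney_box km \<longrightarrow> ennreal (norm (f x)) < Inf S + 1 / Suc n"
    proof (cases "Inf S = top")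
      case True
      show ?thesis unfolding True by simp
    next
      case False
      then have "Inf S < Inf S + 1 / Suc n"
        by (simp add: ennreal_between less_top)
      then obtain C where "C \<in> S" "C < Inf S + 1 / Suc n"
        by (auto simp: Inf_less_iff)
      then show ?thesis unfolding S_def by (auto elim!: eventually_mono)
    qed
  qed
  moreover have "local_Lq top f km = Inf S"
    by (simp add: local_Lq_def S_def)
  ultimately show ?thesis
    by (auto elim!: eventually_mono intro: ennreal_le_of_less_add_inverse_Suc)
qed

lemma local_Lq_eq_0_iff:
  fixes f :: "real \<times> (real ^ 'n::finite) \<Rightarrow> 'v::real_normed_vector"
  assumes "r > 0" "f \<in> borel_measurable lebesgue"
  shows "local_Lq r f km = 0 \<longleftrightarrow> (AE x in lebesgue. x \<in> whitney_box km \<longrightarrow> f x = 0)"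
proof (cases "r = top")
  case True
  show ?thesis
  proof
    assume "local_Lq r f km = 0"
    then show "AE x in lebesgue. x \<in> whitney_box km \<longrightarrow> f x = 0"
      using AE_norm_le_local_Lq_top[of km f] True by (auto elim!: eventually_mono)
  next
    assume "AE x in lebesgue. x \<in> whitney_box km \<longrightarrow> f x = 0"
    then have "local_Lq top f km \<le> ennreal 0"
      by (intro local_Lq_top_le) (auto elim!: eventually_mono)
    then show "local_Lq r f km = 0" using True by simp
  qed
next
  case False
  have "enn2real r > 0"
    using assms(1) False by (simp add: enn2real_positive_iff less_top)
  then have pointwise: "(indicator (whitney_box km) x *
      ennreal (norm (f x) powr enn2real r / fst x ^ (1 + CARD('n))) = 0) \<longleftrightarrow>
      (x \<in> whitney_box km \<longrightarrow> f x = 0)" for x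
  proof (cases "x \<in> whitney_box km")
    case True
    then have "fst x ^ (1 + CARD('n)) > 0"
      using fst_pos_of_whitney_box by (intro zero_less_power)
    then show ?thesis
      using True by (simp add: ennreal_eq_0_iff divide_le_0_iff del: power_Suc)
  qed simp
  have "local_Lq r f km = 0 \<longleftrightarrow> box_moment r f km = 0"
    using False by (simp add: local_Lq_finite_exponent)
  also have "\<dots> \<longleftrightarrow> (AE x in lebesgue. indicator (whitney_box km) x *
      ennreal (norm (f x) powr enn2real r / fst x ^ (1 + CARD('n))) = 0)"
    unfolding box_moment_def
    by (rule nn_integral_0_iff_AE[OF borel_measurable_box_moment_integrand[OF assms(2)]])
  finally show ?thesis by (simp only: pointwise)
qed

lemma box_moment_le_of_pointwise:
  fixes f :: "real \<times> (real ^ 'n::finite) \<Rightarrow> 'v::real_normed_vector"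
    and h :: "real \<times> (real ^ 'n) \<Rightarrow> 'w::real_normed_vector"
  assumes hm: "h \<in> borel_measurable lebesgue" and "k \<ge> 0"
    and bound: "\<And>x. x \<in> whitney_box km \<Longrightarrow> norm (f x) powr enn2real r \<le> k * norm (h x) powr enn2real q"
  shows "box_moment r f km \<le> ennreal k * box_moment q h km"
  unfolding box_moment_def nn_integral_cmult[OF borel_measurable_box_moment_integrand[OF hm], symmetric]
proof (intro nn_integral_mono)
  fix x :: "real \<times> (real ^ 'n)"
  let ?d = "fst x ^ (1 + CARD('n))"
  show "indicator (whitney_box km) x * ennreal (norm (f x) powr enn2real r / ?d)
    \<le> ennreal k * (indicator (whitney_box km) x * ennreal (norm (h x) powr enn2real q / ?d))"
  proof (cases "x \<in> whitney_box km")
    case True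
    then have "?d > 0" using fst_pos_of_whitney_box by (intro zero_less_power)
    then have "norm (f x) powr enn2real r / ?d \<le> (k * norm (h x) powr enn2real q) / ?d"
      using bound[OF True] by (intro divide_right_mono) auto
    then have "norm (f x) powr enn2real r / ?d \<le> k * (norm (h x) powr enn2real q / ?d)"
      by (simp only: times_divide_eq_right)
    then show ?thesis
      using True \<open>k \<ge> 0\<close> by (simp add: ennreal_leI flip: ennreal_mult')
  qed simp
qed

lemma local_Lq_top_le_of_powr_bound:
  fixes f :: "real \<times> (real ^ 'n::finite) \<Rightarrow> 'v::real_normed_vector"
    and h :: "real \<times> (real ^ 'n) \<Rightarrow> 'w::real_normed_vector"
  assumes \<phi>: "scales_exponent \<phi> q top" and a: "local_Lq q h km = ennreal a" "a > 0" and c: "c \<ge> 0"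
    and bound: "\<And>x. x \<in> whitney_box km \<Longrightarrow> norm (f x) \<le> c * (norm (h x) / a) powr \<phi>"
  shows "local_Lq top f km \<le> ennreal c"
proof (rule local_Lq_top_le)
  have "AE x in lebesgue. x \<in> whitney_box km \<longrightarrow> (norm (h x) / a) powr \<phi> \<le> 1"
  proof (cases "q = top")
    case True
    then show ?thesis
      using AE_norm_le_local_Lq_top[of km h] a \<phi>
      by (auto elim!: eventually_mono intro!: powr_le1 simp: scales_exponent_def)
  next
    case False
    then have "\<phi> = 0" using \<phi> by (simp add: scales_exponent_def)
    then show ?thesis by (auto intro!: AE_I2)
  qed
  then show "AE x in lebesgue. x \<in> whitney_box km \<longrightarrow> norm (f x) \<le> c"
  proof (elim eventually_mono, intro impI)
    fix x assume "x \<in> whitney_box km \<longrightarrow> (norm (h x) / a) powr \<phi> \<le> 1" and x: "x \<in> whitney_box km"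
    then have "c * (norm (h x) / a) powr \<phi> \<le> c * 1"
      using c by (intro mult_left_mono) auto
    then show "norm (f x) \<le> c" using bound[OF x] by simp
  qed
qed

lemma local_Lq_le_of_powr_bound:
  fixes f :: "real \<times> (real ^ 'n::finite) \<Rightarrow> 'v::real_normed_vector"
    and h :: "real \<times> (real ^ 'n) \<Rightarrow> 'w::real_normed_vector"
  assumes \<phi>: "scales_exponent \<phi> q r" and "q > 0" and hm: "h \<in> borel_measurable lebesgue"
    and a: "local_Lq q h km = ennreal a" "a > 0" and c: "c \<ge> 0"
    and bound: "\<And>x. x \<in> whitney_box km \<Longrightarrow> norm (f x) \<le> c * (norm (h x) / a) powr \<phi>"
  shows "local_Lq r f km \<le> ennreal c"
proof (cases "r = top")
  case True
  then show ?thesis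
    using local_Lq_top_le_of_powr_bound[OF \<phi>[unfolded True] a c bound] by simp
next
  case False
  define R where "R = enn2real r"
  define Q where "Q = enn2real q"
  have "q \<noteq> top" "\<phi> * R = Q"
    using \<phi> False by (simp_all add: scales_exponent_def R_def Q_def)
  moreover have "Q > 0"
    using \<open>q > 0\<close> \<open>q \<noteq> top\<close> by (simp add: Q_def enn2real_positive_iff less_top)
  ultimately have "R > 0"
    by (metis R_def enn2real_nonneg less_eq_real_def mult_zero_right)
  have "norm (f x) powr R \<le> c powr R / a powr Q * norm (h x) powr Q" if "x \<in> whitney_box km" for x
  proof -
    have "norm (f x) powr R \<le> (c * (norm (h x) / a) powr \<phi>) powr R"
      using bound[OF that] \<open>R > 0\<close> by (intro powr_mono2) auto
    also have "\<dots> = c powr R / a powr Q * norm (h x) powr Q"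
      using c \<open>a > 0\<close> by (simp add: powr_mult powr_powr \<open>\<phi> * R = Q\<close> powr_divide)
    finally show ?thesis .
  qed
  then have "box_moment r f km \<le> ennreal (c powr R / a powr Q) * box_moment q h km"
    by (intro box_moment_le_of_pointwise hm) (simp_all add: R_def Q_def)
  also have "\<dots> = ennreal (c powr R)"
    using box_moment_of_local_Lq[OF \<open>q > 0\<close> \<open>q \<noteq> top\<close> a(1)] \<open>a > 0\<close>
    by (simp add: Q_def ennreal_mult'[symmetric])
  finally have "local_Lq r f km \<le> enn_powr (ennreal (c powr R)) (1 / R)"
    using False by (simp add: local_Lq_finite_exponent R_def enn_powr_mono)
  also have "\<dots> = ennreal c"
    using c \<open>R > 0\<close> by (simp add: enn_powr_ennreal powr_powr)
  finally show ?thesis .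
qed

section \<open>The factorisation\<close>

text \<open>Unlike \<open>borel_measurable_scaleR\<close>, this needs no second countability of the vector space:
  only the scalar factor has to range over a space with a countable basis.\<close>
lemma borel_measurable_scaleR':
  fixes c :: "'a \<Rightarrow> real" and f :: "'a \<Rightarrow> 'v::real_normed_vector"
  assumes c: "c \<in> borel_measurable M" and f: "f \<in> borel_measurable M"
  shows "(\<lambda>x. c x *\<^sub>R f x) \<in> borel_measurable M"
proof (rule borel_measurableI)
  fix S :: "'v set" assume "open S"
  let ?P = "{p :: real \<times> 'v. fst p *\<^sub>R snd p \<in> S}"
  obtain B :: "real set set" where B: "countable B" "topological_basis B"
    using ex_countable_basis by blast
  define W where "W b = \<Union>{V. open V \<and> b \<times> V \<subseteq> ?P}" for b
  have "open ?P"
    using continuous_open_vimage[OF \<open>open S\<close>, of "\<lambda>p :: real \<times> 'v. fst p *\<^sub>R snd p"]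
    by (auto intro: continuous_intros simp: vimage_def)
  have preimage: "(\<lambda>x. c x *\<^sub>R f x) -` S \<inter> space M = (\<Union>b\<in>B. (c -` b \<inter> space M) \<inter> (f -` W b \<inter> space M))"
  proof (intro set_eqI iffI)
    fix x assume x: "x \<in> (\<lambda>x. c x *\<^sub>R f x) -` S \<inter> space M"
    then have "(c x, f x) \<in> ?P" by simp
    then obtain U V where UV: "open U" "open V" "(c x, f x) \<in> U \<times> V" "U \<times> V \<subseteq> ?P"
      by (rule open_prod_elim[OF \<open>open ?P\<close>])
    then obtain b where b: "b \<in> B" "c x \<in> b" "b \<subseteq> U"
      using topological_basisE[OF B(2)] by (metis mem_Sigma_iff)
    then have "f x \<in> W b" using UV unfolding W_def by blast
    then show "x \<in> (\<Union>b\<in>B. (c -` b \<inter> space M) \<inter> (f -` W b \<inter> space M))" using b x by auto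
  next
    fix x assume "x \<in> (\<Union>b\<in>B. (c -` b \<inter> space M) \<inter> (f -` W b \<inter> space M))"
    then show "x \<in> (\<lambda>x. c x *\<^sub>R f x) -` S \<inter> space M" unfolding W_def by auto
  qed
  show "(\<lambda>x. c x *\<^sub>R f x) -` S \<inter> space M \<in> sets M"
    unfolding preimage
  proof (rule sets.countable_UN''[OF B(1)])
    fix b assume "b \<in> B"
    then have "open b" using topological_basis_open[OF B(2)] by blast
    moreover have "open (W b)" unfolding W_def by auto
    ultimately show "(c -` b \<inter> space M) \<inter> (f -` W b \<inter> space M) \<in> sets M"
      by (intro sets.Int measurable_sets[OF c] measurable_sets[OF f]) auto
  qed
qed

text \<open>Off the boxes of positive amplitude the factor is the indicator of \<open>{h \<noteq> 0}\<close>: it then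
  vanishes exactly where \<open>h\<close> does, so \<open>h = G \<cdot> (G\<inverse> h)\<close> holds everywhere.\<close>
definition whitney_factor ::
    "(real \<times> (real ^ 'n::finite) \<Rightarrow> 'v::real_normed_vector) \<Rightarrow> (int \<times> (int ^ 'n) \<Rightarrow> real)
      \<Rightarrow> (int \<times> (int ^ 'n) \<Rightarrow> real) \<Rightarrow> real \<Rightarrow> real \<times> (real ^ 'n) \<Rightarrow> real" where
  "whitney_factor h A Y \<psi> = glue_boxes
     (\<lambda>km x. if A km > 0 then Y km * (norm (h x) / A km) powr \<psi> else if h x = 0 then 0 else 1)
     (\<lambda>x. if h x = 0 then 0 else 1)"

lemma whitney_factor_on_box:
  "x \<in> whitney_box km \<Longrightarrow> A km > 0 \<Longrightarrow> whitney_factor h A Y \<psi> x = Y km * (norm (h x) / A km) powr \<psi>"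
  by (simp add: whitney_factor_def glue_boxes_whitney_box)

lemma whitney_factor_eq_0_iff:
  assumes "\<And>km. A km > 0 \<Longrightarrow> Y km > 0"
  shows "whitney_factor h A Y \<psi> x = 0 \<longleftrightarrow> h x = 0"
proof (cases "\<exists>km. x \<in> whitney_box km")
  case True
  then obtain km where "x \<in> whitney_box km" by blast
  then show ?thesis
    using assms[of km] by (auto simp: whitney_factor_def glue_boxes_whitney_box)
qed (simp add: whitney_factor_def glue_boxes_def)

lemma whitney_factor_scaleR_cofactor:
  assumes "\<And>km. A km > 0 \<Longrightarrow> Y km > 0"
  shows "whitney_factor h A Y \<psi> x *\<^sub>R (inverse (whitney_factor h A Y \<psi> x) *\<^sub>R h x) = h x"
  using whitney_factor_eq_0_iff[where h = h and \<psi> = \<psi> and x = x, OF assms]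
  by (cases "h x = 0") simp_all

lemma measurable_whitney_factor:
  assumes [measurable]: "h \<in> borel_measurable lebesgue"
  shows "whitney_factor h A Y \<psi> \<in> borel_measurable lebesgue"
  unfolding whitney_factor_def by (intro measurable_glue_boxes) measurable

lemma norm_whitney_cofactor_le:
  assumes "x \<in> whitney_box km" "A km > 0" "Y km > 0"
  shows "norm (inverse (whitney_factor h A Y \<psi> x) *\<^sub>R h x) \<le> A km / Y km * (norm (h x) / A km) powr (1 - \<psi>)"
proof (cases "h x = 0")
  case False
  define u where "u = norm (h x) / A km"
  have "u > 0" using False assms(2) by (simp add: u_def)
  have "norm (inverse (whitney_factor h A Y \<psi> x) *\<^sub>R h x) = A km * u / (Y km * u powr \<psi>)"
    using assms \<open>u > 0\<close> by (simp add: whitney_factor_on_box u_def divide_inverse)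
  also have "\<dots> = A km / Y km * u powr (1 - \<psi>)"
    using \<open>u > 0\<close> by (simp add: powr_diff)
  finally show ?thesis by (simp add: u_def)
qed (use assms in auto)

lemma local_Lq_whitney_factor_le:
  fixes h :: "real \<times> (real ^ 'n::finite) \<Rightarrow> 'v::real_normed_vector"
  assumes \<phi>0: "scales_exponent \<phi> q q0" and \<phi>1: "scales_exponent (1 - \<phi>) q q1"
    and "q > 0" "q0 > 0" "q1 > 0" and hm: "h \<in> borel_measurable lebesgue"
    and A: "local_Lq q h km = ennreal (A km)" "A km \<ge> 0" and Y: "\<And>km. A km > 0 \<Longrightarrow> Y km > 0"
  shows "local_Lq q1 (whitney_factor h A Y (1 - \<phi>)) km \<le> ennreal (Y km)"
    and "local_Lq q0 (\<lambda>x. inverse (whitney_factor h A Y (1 - \<phi>) x) *\<^sub>R h x) km \<le> ennreal (A km / Y km)"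
proof -
  let ?G = "whitney_factor h A Y (1 - \<phi>)"
  let ?F = "\<lambda>x. inverse (?G x) *\<^sub>R h x"
  have Gm: "?G \<in> borel_measurable lebesgue"
    using hm by (rule measurable_whitney_factor)
  then have Fm: "?F \<in> borel_measurable lebesgue"
    using hm by (intro borel_measurable_scaleR' borel_measurable_inverse)
  consider "A km > 0" | "A km = 0" using A(2) by linarith
  then have "local_Lq q1 ?G km \<le> ennreal (Y km) \<and> local_Lq q0 ?F km \<le> ennreal (A km / Y km)"
  proof cases
    case 1
    have "local_Lq q1 ?G km \<le> ennreal (Y km)"
      using Y[OF 1] by (intro local_Lq_le_of_powr_bound[OF \<phi>1 \<open>q > 0\<close> hm A(1) 1])
        (simp_all add: whitney_factor_on_box 1)
    moreover have "local_Lq q0 ?F km \<le> ennreal (A km / Y km)"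
      using Y[OF 1] 1 norm_whitney_cofactor_le[of _ km A Y h "1 - \<phi>"]
      by (intro local_Lq_le_of_powr_bound[OF \<phi>0 \<open>q > 0\<close> hm A(1) 1]) simp_all
    ultimately show ?thesis ..
  next
    case 2
    then have "AE x in lebesgue. x \<in> whitney_box km \<longrightarrow> h x = 0"
      using A(1) local_Lq_eq_0_iff[OF \<open>q > 0\<close> hm] by simp
    moreover have "?G x = 0" "?F x = 0" if "h x = 0" for x
      using that whitney_factor_eq_0_iff[of A Y h] Y by simp_all
    ultimately have "local_Lq q1 ?G km = 0" "local_Lq q0 ?F km = 0"
      using local_Lq_eq_0_iff[OF \<open>q1 > 0\<close> Gm] local_Lq_eq_0_iff[OF \<open>q0 > 0\<close> Fm]
      by (auto elim!: eventually_mono)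
    then show ?thesis by simp
  qed
  then show "local_Lq q1 ?G km \<le> ennreal (Y km)" "local_Lq q0 ?F km \<le> ennreal (A km / Y km)"
    by simp_all
qed

lemma amplitude_split_powr:
  fixes l A s s0 s1 \<theta> :: real
  assumes "l > 0" "A \<ge> 0" "s = s0 + s1"
  defines "b \<equiv> l powr (- s) * A"
  shows "l powr (- s1) * (l powr s1 * b powr (1 - \<theta>)) = b powr (1 - \<theta>)"
    and "l powr (- s0) * (A / (l powr s1 * b powr (1 - \<theta>))) = b powr \<theta>"
proof -
  show "l powr (- s1) * (l powr s1 * b powr (1 - \<theta>)) = b powr (1 - \<theta>)"
    using assms(1) by (simp add: powr_add[symmetric])
  show "l powr (- s0) * (A / (l powr s1 * b powr (1 - \<theta>))) = b powr \<theta>"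
  proof (cases "A = 0")
    case False
    then have "b > 0" using assms(1,2) by (simp add: b_def)
    have "l powr (- s0) * (A / (l powr s1 * b powr (1 - \<theta>)))
        = (l powr (- s0) * l powr s / l powr s1) * (b / b powr (1 - \<theta>))"
      using assms(1) by (simp add: b_def powr_minus field_simps)
    also have "l powr (- s0) * l powr s / l powr s1 = 1"
      using assms(1) by (simp add: \<open>s = s0 + s1\<close> powr_add powr_minus)
    also have "b / b powr (1 - \<theta>) = b powr \<theta>"
      using \<open>b > 0\<close> powr_diff[of b 1 "1 - \<theta>"] by simp
    finally show ?thesis by simp
  qed (simp add: b_def)
qed

lemma whitney_factor_sequence_le:
  fixes h :: "real \<times> (real ^ 'n::finite) \<Rightarrow> 'v::real_normed_vector" and \<theta> :: real
  assumes \<phi>0: "scales_exponent \<phi> q q0" and \<phi>1: "scales_exponent (1 - \<phi>) q q1"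
    and "q > 0" "q0 > 0" "q1 > 0" and hm: "h \<in> borel_measurable lebesgue"
    and fin: "local_Lq q h km < top" and "s = s0 + s1"
  defines "A \<equiv> \<lambda>km. enn2real (local_Lq q h km)"
    and "Y \<equiv> \<lambda>km. dyadic_len km powr s1 *
           (dyadic_len km powr (- s) * enn2real (local_Lq q h km)) powr (1 - \<theta>)"
  shows "ennreal (dyadic_len km powr (- s1)) * local_Lq q1 (whitney_factor h A Y (1 - \<phi>)) km
      \<le> enn_powr (ennreal (dyadic_len km powr (- s)) * local_Lq q h km) (1 - \<theta>)"
    and "ennreal (dyadic_len km powr (- s0)) * local_Lq q0 (\<lambda>x. inverse (whitney_factor h A Y (1 - \<phi>) x) *\<^sub>R h x) km
      \<le> enn_powr (ennreal (dyadic_len km powr (- s)) * local_Lq q h km) \<theta>"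
proof -
  let ?l = "dyadic_len km" and ?b = "dyadic_len km powr (- s) * A km"
  have A: "local_Lq q h km = ennreal (A km)" "A km \<ge> 0"
    using fin by (auto simp: A_def less_top)
  have "Y km > 0" if "A km > 0" for km
    using that dyadic_len_pos[of km] by (simp add: Y_def A_def)
  note bounds = local_Lq_whitney_factor_le[where A = A and Y = Y, OF \<phi>0 \<phi>1 assms(3-6) A this]
  have c: "enn_powr (ennreal (?l powr (- s)) * local_Lq q h km) t = ennreal (?b powr t)" for t
    using A by (simp add: enn_powr_ennreal flip: ennreal_mult)
  have "Y km = ?l powr s1 * ?b powr (1 - \<theta>)"
    by (simp add: Y_def A_def)
  note split = amplitude_split_powr[OF dyadic_len_pos A(2) \<open>s = s0 + s1\<close>, of km \<theta>, folded this]
  show "ennreal (?l powr (- s1)) * local_Lq q1 (whitney_factor h A Y (1 - \<phi>)) km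
      \<le> enn_powr (ennreal (?l powr (- s)) * local_Lq q h km) (1 - \<theta>)"
    using mult_left_mono[OF bounds(1), of "ennreal (?l powr (- s1))"] split(1)
    by (simp add: c flip: ennreal_mult')
  show "ennreal (?l powr (- s0)) * local_Lq q0 (\<lambda>x. inverse (whitney_factor h A Y (1 - \<phi>) x) *\<^sub>R h x) km
      \<le> enn_powr (ennreal (?l powr (- s)) * local_Lq q h km) \<theta>"
    using mult_left_mono[OF bounds(2), of "ennreal (?l powr (- s0))"] split(2)
    by (simp add: c flip: ennreal_mult')
qed

lemma Z_norm_eq_weighted_lp:
  fixes f :: "real \<times> (real ^ 'n::finite) \<Rightarrow> 'v::real_normed_vector"
  shows "Z_norm p q s f = weighted_lp p (\<lambda>km :: int \<times> (int ^ 'n). ennreal (dyadic_len km ^ CARD('n)))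
    (\<lambda>km. ennreal (dyadic_len km powr (- s)) * local_Lq q f km)"
  by (simp add: Z_norm_def weighted_lp_def)

lemma local_Lq_less_top_of_Z_space:
  fixes h :: "real \<times> (real ^ 'n::finite) \<Rightarrow> 'v::real_normed_vector"
  assumes "h \<in> Z_space p q s"
  shows "local_Lq q h km < top"
proof -
  have N: "Z_norm p q s h < top"
    using assms by (simp add: Z_space_def)
  show ?thesis
    using weighted_lp_less_top_imp[OF N[unfolded Z_norm_eq_weighted_lp], of km] dyadic_len_pos[of km]
    by (auto simp: ennreal_mult_less_top)
qed

lemma Z_norm_le_powr:
  fixes f :: "real \<times> (real ^ 'n::finite) \<Rightarrow> 'v::real_normed_vector"
    and h :: "real \<times> (real ^ 'n) \<Rightarrow> 'w::real_normed_vector"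
  assumes "scales_exponent \<theta> p p0" "p > 0"
    and "\<And>km. ennreal (dyadic_len km powr (- s0)) * local_Lq q0 f km
      \<le> enn_powr (ennreal (dyadic_len km powr (- s)) * local_Lq q h km) \<theta>"
  shows "Z_norm p0 q0 s0 f \<le> enn_powr (Z_norm p q s h) \<theta>"
  unfolding Z_norm_eq_weighted_lp
  using assms(3) by (intro order_trans[OF weighted_lp_mono weighted_lp_powr_le[OF assms(1,2)]])
    (simp_all add: dyadic_len_pos)

lemma Z_space_factorization:
  fixes h :: "real \<times> (real ^ 'n::finite) \<Rightarrow> 'v::real_normed_vector"
  assumes p: "p0 > 0" "p1 > 0" "inverse p = inverse p0 + inverse p1"
    and q: "q0 > 0" "q1 > 0" "inverse q = inverse q0 + inverse q1"
    and "s = s0 + s1" and hZ: "h \<in> Z_space p q s"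
  obtains F :: "real \<times> (real ^ 'n) \<Rightarrow> 'v" and G :: "real \<times> (real ^ 'n) \<Rightarrow> real"
  where "F \<in> Z_space p0 q0 s0" "G \<in> Z_space p1 q1 s1" "\<And>x. h x = G x *\<^sub>R F x"
    "Z_norm p0 q0 s0 F * Z_norm p1 q1 s1 G \<le> Z_norm p q s h"
proof -
  define \<theta> where "\<theta> = exponent_ratio p p0"
  define \<phi> where "\<phi> = exponent_ratio q q0"
  define A where "A km = enn2real (local_Lq q h km)" for km :: "int \<times> (int ^ 'n)"
  define Y where "Y km = dyadic_len km powr s1 *
    (dyadic_len km powr (- s) * enn2real (local_Lq q h km)) powr (1 - \<theta>)" for km :: "int \<times> (int ^ 'n)"
  define G where "G = whitney_factor h A Y (1 - \<phi>)"
  define F where "F = (\<lambda>x. inverse (G x) *\<^sub>R h x)"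
  let ?N = "Z_norm p q s h"
  have hm: "h \<in> borel_measurable lebesgue" and N: "?N < top"
    using hZ by (simp_all add: Z_space_def)
  have fin: "local_Lq q h km < top" for km
    using hZ by (rule local_Lq_less_top_of_Z_space)
  note exps = hoelder_exponents_scale[OF p] hoelder_exponents_scale[OF q]
    hoelder_exponent_pos[OF p] hoelder_exponent_pos[OF q]
  note box_bounds = whitney_factor_sequence_le[where \<theta> = \<theta>, OF exps(3,4) exps(6) q(1,2) hm fin
      \<open>s = s0 + s1\<close>, folded A_def Y_def \<phi>_def, folded G_def, folded F_def]
  have ZF: "Z_norm p0 q0 s0 F \<le> enn_powr ?N \<theta>"
    using exps(1) exps(5) box_bounds(2) unfolding \<theta>_def by (rule Z_norm_le_powr)
  have ZG: "Z_norm p1 q1 s1 G \<le> enn_powr ?N (1 - \<theta>)"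
    using exps(2) exps(5) box_bounds(1) unfolding \<theta>_def by (rule Z_norm_le_powr)
  have Gm: "G \<in> borel_measurable lebesgue"
    unfolding G_def using hm by (rule measurable_whitney_factor)
  show ?thesis
  proof
    show "F \<in> Z_space p0 q0 s0" "G \<in> Z_space p1 q1 s1"
      using ZF ZG N Gm hm
      by (auto simp: Z_space_def F_def intro!: borel_measurable_scaleR' borel_measurable_inverse
          elim!: le_less_trans)
    have "Y km > 0" if "A km > 0" for km
      using that dyadic_len_pos[of km] by (simp add: A_def Y_def)
    then show "h x = G x *\<^sub>R F x" for x
      unfolding F_def G_def by (simp only: whitney_factor_scaleR_cofactor)
    have "Z_norm p0 q0 s0 F * Z_norm p1 q1 s1 G \<le> enn_powr ?N \<theta> * enn_powr ?N (1 - \<theta>)"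
      using ZF ZG by (rule mult_mono) simp_all
    then show "Z_norm p0 q0 s0 F * Z_norm p1 q1 s1 G \<le> ?N"
      using N by (simp add: enn_powr_add enn_powr_one)
  qed
qed

theorem proposition2p66:
  fixes p0 p1 q0 q1 p q :: ennreal and s0 s1 s :: real
  assumes "p0 > 0" and "p1 > 0" and "q0 > 0" and "q1 > 0"
    and "inverse p = inverse p0 + inverse p1"
    and "inverse q = inverse q0 + inverse q1"
    and "s = s0 + s1"
  shows "\<exists>C::real. C > 0 \<and>
    (\<forall>h :: real \<times> (real ^ ('n::finite)) \<Rightarrow> 'v::real_normed_vector.
       h \<in> Z_space p q s \<longrightarrow>
       (\<exists>(F :: real \<times> (real ^ 'n) \<Rightarrow> 'v) (G :: real \<times> (real ^ 'n) \<Rightarrow> real).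
          F \<in> Z_space p0 q0 s0 \<and> G \<in> Z_space p1 q1 s1 \<and>
          (\<forall>x. fst x > 0 \<longrightarrow> h x = G x *\<^sub>R F x) \<and>
          Z_norm p0 q0 s0 F * Z_norm p1 q1 s1 G \<le> ennreal C * Z_norm p q s h))"
proof (intro exI[of _ 1] conjI allI impI)
  fix h :: "real \<times> (real ^ 'n) \<Rightarrow> 'v"
  assume "h \<in> Z_space p q s"
  obtain F G where "F \<in> Z_space p0 q0 s0" "G \<in> Z_space p1 q1 s1" "\<And>x. h x = G x *\<^sub>R F x"
    "Z_norm p0 q0 s0 F * Z_norm p1 q1 s1 G \<le> Z_norm p q s h"
    using Z_space_factorization[OF assms(1,2,5,3,4,6,7) \<open>h \<in> Z_space p q s\<close>] by blast
  then show "\<exists>F G. F \<in> Z_space p0 q0 s0 \<and> G \<in> Z_space p1 q1 s1 \<and>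
      (\<forall>x. fst x > 0 \<longrightarrow> h x = G x *\<^sub>R F x) \<and>
      Z_norm p0 q0 s0 F * Z_norm p1 q1 s1 G \<le> ennreal 1 * Z_norm p q s h"
    by (intro exI[of _ F] exI[of _ G]) simp
qed simp

end
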